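(* Consider a recurrent network of $N$ units partitioned into $C$ cell types, with recurrent weight matrix $W$, a scalar $\mu$, and, at each time $t=1,2,\dots$, given eligibility traces $e_{pq,t}$, learning signals $L_{j,t}=\frac{\partial E}{\partial z_{j,t}}$ and activation derivatives $h_{j,t}$. The ModProp update $$\Delta W_{pq}\big|_t=L_{p,t}\,e_{pq,t}+\sum_{\alpha\in C}\Big(\sum_{j\in\alpha}L_{j,t}h_{j,t}\Big)\sum_{s=1}^{t}(W^s)_{\alpha\beta}\,\mu^{s-1}\,e_{pq,t-s}\qquad(p\in\beta)$$ admits an online (causal, computed in real time as $t$ advances) in-silico implementation, computing $\Delta W_{pq}|_t$ for all $p,q$ at every time step, with $O(CN^2)$ storage and $O(C^2N^2)$ computational complexity per time step.
   Context: For cell types $\alpha,\beta$, $N_\alpha$ is the number of units of type $\alpha$, $W_{\alpha\beta}=\mathbb{E}_{j\in\alpha,p\in\beta}[W_{jp}]$ is the average of the recurrent weights from type-$\beta$ units to type-$\alpha$ units, $(W^1)_{\alpha\beta}=W_{\alpha\beta}$, and $(W^{s+1})_{\alpha\beta}=\sum_{\gamma\in C}N_\gamma (W^1)_{\alpha\gamma}(W^s)_{\gamma\beta}$ (the type-level entries of the $(s+1)$-th power of the matrix whose $(i,j)$ entry is $W_{\alpha\beta}$ for $i\in\alpha,j\in\beta$). The implementation need not be biologically plausible. *)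

theory Defs
  imports Main "HOL.Real"
begin

text \<open>Units are 0..N-1, cell types are 0..C-1, ct j is the type of unit j.
  W j p is the recurrent weight from unit p to unit j.
  e p q t is the eligibility trace e_{pq,t} (t = 0,1,2,...),
  L j t is the learning signal L_{j,t}, h j t the activation derivative h_{j,t}.\<close>

definition ncount :: "nat \<Rightarrow> (nat \<Rightarrow> nat) \<Rightarrow> nat \<Rightarrow> nat" where
  "ncount N ct \<alpha> = card {j. j < N \<and> ct j = \<alpha>}"

definition Wavg :: "nat \<Rightarrow> (nat \<Rightarrow> nat) \<Rightarrow> (nat \<Rightarrow> nat \<Rightarrow> real) \<Rightarrow> nat \<Rightarrow> nat \<Rightarrow> real" where
  "Wavg N ct W \<alpha> \<beta> =
     (\<Sum>j\<in>{j. j < N \<and> ct j = \<alpha>}. \<Sum>p\<in>{p. p < N \<and> ct p = \<beta>}. W j p)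
       / (real (ncount N ct \<alpha>) * real (ncount N ct \<beta>))"

text \<open>Type-level powers: tpow s = (W^s)_{\<alpha>\<beta>} for s \<ge> 1 (the value at s = 0 is unused).\<close>
fun tpow :: "nat \<Rightarrow> nat \<Rightarrow> (nat \<Rightarrow> nat) \<Rightarrow> (nat \<Rightarrow> nat \<Rightarrow> real) \<Rightarrow> nat \<Rightarrow> nat \<Rightarrow> nat \<Rightarrow> real" where
  "tpow N C ct W 0 \<alpha> \<beta> = 0"
| "tpow N C ct W (Suc s) \<alpha> \<beta> =
     (if s = 0 then Wavg N ct W \<alpha> \<beta>
      else (\<Sum>\<gamma><C. real (ncount N ct \<gamma>) * Wavg N ct W \<alpha> \<gamma> * tpow N C ct W s \<gamma> \<beta>))"

definition modprop_update ::
  "nat \<Rightarrow> nat \<Rightarrow> (nat \<Rightarrow> nat) \<Rightarrow> (nat \<Rightarrow> nat \<Rightarrow> real) \<Rightarrow> real \<Rightarrow>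
   (nat \<Rightarrow> nat \<Rightarrow> nat \<Rightarrow> real) \<Rightarrow> (nat \<Rightarrow> nat \<Rightarrow> real) \<Rightarrow> (nat \<Rightarrow> nat \<Rightarrow> real) \<Rightarrow>
   nat \<Rightarrow> nat \<Rightarrow> nat \<Rightarrow> real" where
  "modprop_update N C ct W \<mu> e L h p q t =
     L p t * e p q t +
     (\<Sum>\<alpha><C. (\<Sum>j\<in>{j. j < N \<and> ct j = \<alpha>}. L j t * h j t) *
        (\<Sum>s\<in>{1..t}. tpow N C ct W s \<alpha> (ct p) * \<mu> ^ (s - 1) * e p q (t - s)))"

text \<open>A machine has M real registers (this is its total storage). At each time step
  the current inputs are written into fixed registers, then a fixed straight-line
  program is executed (its length is the computational cost of the step), and the
  outputs are read from fixed registers. Registers persist between time steps and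
  start at 0.\<close>

datatype instr = Const nat real | Add nat nat nat | Mul nat nat nat

fun exec_instr :: "instr \<Rightarrow> (nat \<Rightarrow> real) \<Rightarrow> (nat \<Rightarrow> real)" where
  "exec_instr (Const d c) m = m(d := c)"
| "exec_instr (Add d a b) m = m(d := m a + m b)"
| "exec_instr (Mul d a b) m = m(d := m a * m b)"

definition run_prog :: "instr list \<Rightarrow> (nat \<Rightarrow> real) \<Rightarrow> (nat \<Rightarrow> real)" where
  "run_prog prog m = fold exec_instr prog m"

fun instr_regs :: "instr \<Rightarrow> nat set" where
  "instr_regs (Const d c) = {d}"
| "instr_regs (Add d a b) = {d, a, b}"
| "instr_regs (Mul d a b) = {d, a, b}"

definition load_inputs :: "(nat \<Rightarrow> nat) \<Rightarrow> nat \<Rightarrow> (nat \<Rightarrow> real) \<Rightarrow> (nat \<Rightarrow> real) \<Rightarrow> (nat \<Rightarrow> real)" where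
  "load_inputs posIn I inp m = fold (\<lambda>i m'. m'(posIn i := inp i)) [0..<I] m"

fun mem_seq :: "instr list \<Rightarrow> (nat \<Rightarrow> nat) \<Rightarrow> nat \<Rightarrow> (nat \<Rightarrow> nat \<Rightarrow> real) \<Rightarrow> nat \<Rightarrow> (nat \<Rightarrow> real)" where
  "mem_seq prog posIn I inp 0 = run_prog prog (load_inputs posIn I (inp 0) (\<lambda>_. 0))"
| "mem_seq prog posIn I inp (Suc t) = run_prog prog (load_inputs posIn I (inp (Suc t)) (mem_seq prog posIn I inp t))"

definition n_inputs :: "nat \<Rightarrow> nat" where
  "n_inputs N = 2 * N^2 + 2 * N + 1"

definition mp_input ::
  "nat \<Rightarrow> (nat \<Rightarrow> nat \<Rightarrow> real) \<Rightarrow> real \<Rightarrow> (nat \<Rightarrow> nat \<Rightarrow> nat \<Rightarrow> real) \<Rightarrow>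
   (nat \<Rightarrow> nat \<Rightarrow> real) \<Rightarrow> (nat \<Rightarrow> nat \<Rightarrow> real) \<Rightarrow> nat \<Rightarrow> nat \<Rightarrow> real" where
  "mp_input N W \<mu> e L h t i =
     (if i < N^2 then W (i div N) (i mod N)
      else if i < 2 * N^2 then e ((i - N^2) div N) ((i - N^2) mod N) t
      else if i < 2 * N^2 + N then L (i - 2 * N^2) t
      else if i < 2 * N^2 + 2 * N then h (i - 2 * N^2 - N) t
      else \<mu>)"

definition valid_machine :: "nat \<Rightarrow> instr list \<Rightarrow> (nat \<Rightarrow> nat) \<Rightarrow> (nat \<Rightarrow> nat \<Rightarrow> nat) \<Rightarrow> nat \<Rightarrow> bool" where
  "valid_machine M prog posIn posOut N \<longleftrightarrow>
     (\<forall>ins \<in> set prog. \<forall>r \<in> instr_regs ins. r < M) \<and>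
     (\<forall>i < n_inputs N. posIn i < M) \<and>
     (\<forall>p < N. \<forall>q < N. posOut p q < M)"

end

theory Submission
  imports Defs
begin

(* Write G t \<alpha> p q = \<Sum>s=1..t. (W^s)_{\<alpha>,type p} \<mu>^(s-1) e_{pq,t-s}. Then the ModProp update is
   L_{p,t} e_{pq,t} + \<Sum>\<alpha> (\<Sum>j\<in>\<alpha>. L_{j,t} h_{j,t}) G t \<alpha> p q, and peeling off the s = 1 term of the
   matrix power gives the causal recursion
     G (t+1) \<alpha> p q = W_{\<alpha>,type p} e_{pq,t} + \<Sum>\<gamma>. N_\<gamma> W_{\<alpha>\<gamma>} \<mu> G t \<gamma> p q.
   A machine therefore only has to carry the C N^2 numbers G t \<alpha> p q from one time step to the next.
   Each step computes the type-level quantities (W_{\<alpha>\<beta>} as masked sums over all N^2 weights, for all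
   C^2 pairs), then the outputs and the next G, every value being a short sum of products of registers;
   all of this costs O(C^2 N^2) instructions and O(C N^2) registers. *)

lemma mixed_radix_less: "a < A \<Longrightarrow> b < B \<Longrightarrow> a * B + b < A * (B :: nat)"
proof -
  assume "a < A" "b < B"
  then have "a * B + b < Suc a * B" by simp
  also have "\<dots> \<le> A * B" using \<open>a < A\<close> by (intro mult_right_mono) simp_all
  finally show ?thesis .
qed

lemma mixed_radix_eq_iff: "b < B \<Longrightarrow> b' < B \<Longrightarrow> a * B + b = a' * B + b' \<longleftrightarrow> a = a' \<and> b = (b' :: nat)"
proof
  assume "b < B" "b' < B" "a * B + b = a' * B + b'"
  moreover have "(x * B + y) div B = x" "(x * B + y) mod B = y" if "y < B" for x y
    using that by simp_all
  ultimately show "a = a' \<and> b = b'" by metis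
qed simp

lemma le_if_lessThan_subset_image:
  fixes C N :: nat
  assumes "{..<C} \<subseteq> f ` {..<N}"
  shows "C \<le> N"
proof -
  have "card {..<C} \<le> card (f ` {..<N})"
    using assms by (intro card_mono) simp_all
  also have "\<dots> \<le> card {..<N}"
    by (rule card_image_le) simp
  finally show ?thesis by simp
qed

lemma sum_list_map_upt: "(\<Sum>x \<leftarrow> [0..<n]. f x) = (\<Sum>x<n. f x)"
  by (simp add: interv_sum_list_conv_sum_set_nat atLeast0LessThan)

lemma run_prog_Nil [simp]: "run_prog [] m = m"
  by (simp add: run_prog_def)

lemma run_prog_Cons [simp]: "run_prog (ins # prog) m = run_prog prog (exec_instr ins m)"
  by (simp add: run_prog_def)

lemma run_prog_append [simp]: "run_prog (prog @ prog') m = run_prog prog' (run_prog prog m)"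
  by (simp add: run_prog_def)

lemma load_inputs_Suc:
  "load_inputs posIn (Suc I) inp m = (load_inputs posIn I inp m)(posIn I := inp I)"
  by (simp add: load_inputs_def)

lemma load_inputs_at:
  assumes "inj_on posIn {..<I}" "i < I"
  shows "load_inputs posIn I inp m (posIn i) = inp i"
  using assms
proof (induction I)
  case (Suc I)
  then show ?case
    by (cases "i = I") (auto simp: load_inputs_Suc inj_on_def)
qed simp

lemma load_inputs_other:
  assumes "r \<notin> posIn ` {..<I}"
  shows "load_inputs posIn I inp m r = m r"
  using assms
proof (induction I)
  case 0
  then show ?case by (simp add: load_inputs_def)
next
  case (Suc I)
  then show ?case by (simp add: load_inputs_Suc lessThan_Suc)
qed

lemma input_positions_less [simp]:
  "p < N \<Longrightarrow> q < N \<Longrightarrow> p * N + q < n_inputs N"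
  "p < N \<Longrightarrow> q < N \<Longrightarrow> N\<^sup>2 + (p * N + q) < n_inputs N"
  "j < N \<Longrightarrow> 2 * N\<^sup>2 + j < n_inputs N"
  "j < N \<Longrightarrow> 2 * N\<^sup>2 + N + j < n_inputs N"
  "2 * N\<^sup>2 + 2 * N < n_inputs N"
  using mixed_radix_less[of p N q N] by (simp_all add: n_inputs_def power2_eq_square)

lemma mp_input_at [simp]:
  "p < N \<Longrightarrow> q < N \<Longrightarrow> mp_input N W \<mu> e L h t (p * N + q) = W p q"
  "p < N \<Longrightarrow> q < N \<Longrightarrow> mp_input N W \<mu> e L h t (N\<^sup>2 + (p * N + q)) = e p q t"
  "j < N \<Longrightarrow> mp_input N W \<mu> e L h t (2 * N\<^sup>2 + j) = L j t"
  "j < N \<Longrightarrow> mp_input N W \<mu> e L h t (2 * N\<^sup>2 + N + j) = h j t"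
  "mp_input N W \<mu> e L h t (2 * N\<^sup>2 + 2 * N) = \<mu>"
  using mixed_radix_less[of p N q N] by (simp_all add: mp_input_def power2_eq_square)

definition sumprod :: "('r \<Rightarrow> nat) \<Rightarrow> (nat \<Rightarrow> real) \<Rightarrow> (real \<times> 'r \<times> 'r) list \<Rightarrow> real" where
  "sumprod \<rho> m ts = (\<Sum>(c, x, y) \<leftarrow> ts. c * m (\<rho> x) * m (\<rho> y))"

definition accumulate_prog :: "('r \<Rightarrow> nat) \<Rightarrow> 'r \<Rightarrow> 'r \<Rightarrow> 'r \<Rightarrow> real \<times> 'r \<times> 'r \<Rightarrow> instr list" where
  "accumulate_prog \<rho> t u d = (\<lambda>(c, x, y).
     [Mul (\<rho> t) (\<rho> x) (\<rho> y), Const (\<rho> u) c, Mul (\<rho> t) (\<rho> t) (\<rho> u), Add (\<rho> d) (\<rho> d) (\<rho> t)])"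

definition sumprod_prog :: "('r \<Rightarrow> nat) \<Rightarrow> 'r \<Rightarrow> 'r \<Rightarrow> 'r \<Rightarrow> (real \<times> 'r \<times> 'r) list \<Rightarrow> instr list" where
  "sumprod_prog \<rho> t u d ts = Const (\<rho> d) 0 # concat (map (accumulate_prog \<rho> t u d) ts)"

definition batch_prog ::
  "('r \<Rightarrow> nat) \<Rightarrow> 'r \<Rightarrow> 'r \<Rightarrow> ('i \<Rightarrow> 'r) \<Rightarrow> ('i \<Rightarrow> (real \<times> 'r \<times> 'r) list) \<Rightarrow> 'i list \<Rightarrow> instr list" where
  "batch_prog \<rho> t u dst ts is = concat (map (\<lambda>i. sumprod_prog \<rho> t u (dst i) (ts i)) is)"

lemma sumprod_Nil [simp]: "sumprod \<rho> m [] = 0"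
  and sumprod_Cons [simp]: "sumprod \<rho> m ((c, x, y) # ts) = c * m (\<rho> x) * m (\<rho> y) + sumprod \<rho> m ts"
  by (simp_all add: sumprod_def)

lemma sumprod_append [simp]: "sumprod \<rho> m (ts @ ts') = sumprod \<rho> m ts + sumprod \<rho> m ts'"
  by (simp add: sumprod_def)

lemma sumprod_concat [simp]: "sumprod \<rho> m (concat tss) = (\<Sum>ts \<leftarrow> tss. sumprod \<rho> m ts)"
  by (induction tss) simp_all

lemma sumprod_map [simp]: "sumprod \<rho> m (map f xs) = (\<Sum>x \<leftarrow> xs. sumprod \<rho> m [f x])"
  by (induction xs) (simp_all add: sumprod_def)

lemma sumprod_cong:
  assumes "\<And>c x y. (c, x, y) \<in> set ts \<Longrightarrow> m (\<rho> x) = m' (\<rho> x) \<and> m (\<rho> y) = m' (\<rho> y)"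
  shows "sumprod \<rho> m ts = sumprod \<rho> m' ts"
  using assms unfolding sumprod_def by (intro arg_cong[where f = sum_list] map_cong) auto

lemma run_accumulate_prog:
  assumes "\<rho> t \<noteq> \<rho> u" "\<rho> d \<noteq> \<rho> t" "\<rho> d \<noteq> \<rho> u"
  shows "run_prog (accumulate_prog \<rho> t u d (c, x, y)) m =
    m(\<rho> t := m (\<rho> x) * m (\<rho> y) * c, \<rho> u := c, \<rho> d := m (\<rho> d) + m (\<rho> x) * m (\<rho> y) * c)"
  using assms by (auto simp: accumulate_prog_def)

lemma run_accumulate_progs:
  assumes "\<rho> t \<noteq> \<rho> u" "\<rho> d \<noteq> \<rho> t" "\<rho> d \<noteq> \<rho> u"
    and "\<And>c x y. (c, x, y) \<in> set ts \<Longrightarrow> \<rho> x \<notin> {\<rho> t, \<rho> u, \<rho> d} \<and> \<rho> y \<notin> {\<rho> t, \<rho> u, \<rho> d}"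
  shows "run_prog (concat (map (accumulate_prog \<rho> t u d) ts)) m (\<rho> d) = m (\<rho> d) + sumprod \<rho> m ts \<and>
    (\<forall>r. r \<notin> {\<rho> t, \<rho> u, \<rho> d} \<longrightarrow> run_prog (concat (map (accumulate_prog \<rho> t u d) ts)) m r = m r)"
  using assms(4)
proof (induction ts arbitrary: m)
  case (Cons tm ts)
  obtain c x y where tm: "tm = (c, x, y)"
    by (cases tm) auto
  define m' where "m' = run_prog (accumulate_prog \<rho> t u d (c, x, y)) m"
  have m'_eq: "m' = m(\<rho> t := m (\<rho> x) * m (\<rho> y) * c, \<rho> u := c, \<rho> d := m (\<rho> d) + m (\<rho> x) * m (\<rho> y) * c)"
    unfolding m'_def using assms(1-3) by (rule run_accumulate_prog)
  have "sumprod \<rho> m' ts = sumprod \<rho> m ts"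
    by (rule sumprod_cong) (use Cons.prems in \<open>auto simp: m'_eq\<close>)
  moreover have "run_prog (concat (map (accumulate_prog \<rho> t u d) ts)) m' (\<rho> d) = m' (\<rho> d) + sumprod \<rho> m' ts \<and>
    (\<forall>r. r \<notin> {\<rho> t, \<rho> u, \<rho> d} \<longrightarrow> run_prog (concat (map (accumulate_prog \<rho> t u d) ts)) m' r = m' r)"
    by (rule Cons.IH) (meson Cons.prems list.set_intros(2))
  moreover have "m' (\<rho> d) = m (\<rho> d) + c * m (\<rho> x) * m (\<rho> y)"
    and "\<And>r. r \<notin> {\<rho> t, \<rho> u, \<rho> d} \<Longrightarrow> m' r = m r"
    by (auto simp: m'_eq)
  ultimately show ?case
    by (simp add: tm m'_def)
qed simp

lemma run_sumprod_prog:
  assumes "\<rho> t \<noteq> \<rho> u" "\<rho> d \<noteq> \<rho> t" "\<rho> d \<noteq> \<rho> u"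
    and "\<And>c x y. (c, x, y) \<in> set ts \<Longrightarrow> \<rho> x \<notin> {\<rho> t, \<rho> u, \<rho> d} \<and> \<rho> y \<notin> {\<rho> t, \<rho> u, \<rho> d}"
  shows "run_prog (sumprod_prog \<rho> t u d ts) m (\<rho> d) = sumprod \<rho> m ts"
    and "r \<notin> {\<rho> t, \<rho> u, \<rho> d} \<Longrightarrow> run_prog (sumprod_prog \<rho> t u d ts) m r = m r"
proof -
  have "sumprod \<rho> (m(\<rho> d := 0)) ts = sumprod \<rho> m ts"
    by (rule sumprod_cong) (use assms(4) in auto)
  then show "run_prog (sumprod_prog \<rho> t u d ts) m (\<rho> d) = sumprod \<rho> m ts"
    and "r \<notin> {\<rho> t, \<rho> u, \<rho> d} \<Longrightarrow> run_prog (sumprod_prog \<rho> t u d ts) m r = m r"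
    using run_accumulate_progs[OF assms, where m = "m(\<rho> d := 0)"] by (auto simp: sumprod_prog_def)
qed

lemma run_batch_prog:
  assumes inj: "inj_on \<rho> R" and temps: "t \<in> R" "u \<in> R" "t \<noteq> u" "t \<notin> dst ` set is" "u \<notin> dst ` set is"
    and dst: "inj_on dst (set is)" "dst ` set is \<subseteq> R"
    and src: "\<And>i c x y. i \<in> set is \<Longrightarrow> (c, x, y) \<in> set (ts i) \<Longrightarrow>
      x \<in> R - dst ` set is - {t, u} \<and> y \<in> R - dst ` set is - {t, u}"
  shows "i \<in> set is \<Longrightarrow> run_prog (batch_prog \<rho> t u dst ts is) m (\<rho> (dst i)) = sumprod \<rho> m (ts i)"
    and "r \<in> R \<Longrightarrow> r \<notin> dst ` set is \<union> {t, u} \<Longrightarrow> run_prog (batch_prog \<rho> t u dst ts is) m (\<rho> r) = m (\<rho> r)"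
proof -
  note \<rho>_eq_iff = inj_on_eq_iff[OF inj]
  \<comment> \<open>Induction over a sublist, so that the hypotheses about \<open>is\<close> stay fixed.\<close>
  have "(\<forall>i\<in>set js. run_prog (batch_prog \<rho> t u dst ts js) m (\<rho> (dst i)) = sumprod \<rho> m (ts i)) \<and>
    (\<forall>r\<in>R. r \<notin> dst ` set js \<union> {t, u} \<longrightarrow> run_prog (batch_prog \<rho> t u dst ts js) m (\<rho> r) = m (\<rho> r))"
    if "set js \<subseteq> set is" for js m
    using that
  proof (induction js arbitrary: m)
    case Nil
    then show ?case by (simp add: batch_prog_def)
  next
    case (Cons i js)
    have i: "i \<in> set is" "dst i \<in> R" "dst i \<noteq> t" "dst i \<noteq> u"
      using Cons.prems dst(2) temps(4,5) by auto
    define m' where "m' = run_prog (sumprod_prog \<rho> t u (dst i) (ts i)) m"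
    have src_i: "\<rho> x \<notin> {\<rho> t, \<rho> u, \<rho> (dst i)} \<and> \<rho> y \<notin> {\<rho> t, \<rho> u, \<rho> (dst i)}"
      if "(c, x, y) \<in> set (ts i)" for c x y
      using src[OF i(1) that] i temps by (auto simp: \<rho>_eq_iff)
    have m'_dst: "m' (\<rho> (dst i)) = sumprod \<rho> m (ts i)"
      unfolding m'_def using i temps src_i by (intro run_sumprod_prog(1)) (auto simp: \<rho>_eq_iff)
    have m'_frame: "m' (\<rho> r) = m (\<rho> r)" if "r \<in> R" "r \<notin> {t, u, dst i}" for r
      unfolding m'_def using i temps src_i that by (intro run_sumprod_prog(2)) (auto simp: \<rho>_eq_iff)
    have IH: "(\<forall>j\<in>set js. run_prog (batch_prog \<rho> t u dst ts js) m' (\<rho> (dst j)) = sumprod \<rho> m' (ts j)) \<and>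
      (\<forall>r\<in>R. r \<notin> dst ` set js \<union> {t, u} \<longrightarrow> run_prog (batch_prog \<rho> t u dst ts js) m' (\<rho> r) = m' (\<rho> r))"
      using Cons by simp
    have same_val: "sumprod \<rho> m' (ts j) = sumprod \<rho> m (ts j)" if "j \<in> set js" for j
    proof (rule sumprod_cong)
      fix c x y assume xy: "(c, x, y) \<in> set (ts j)"
      have "j \<in> set is" using that Cons.prems by auto
      from src[OF this xy] show "m' (\<rho> x) = m (\<rho> x) \<and> m' (\<rho> y) = m (\<rho> y)"
        using i by (auto intro!: m'_frame)
    qed
    have "dst i \<notin> dst ` set js" if "i \<notin> set js"
      using that dst(1) Cons.prems by (auto dest: inj_onD)
    then show ?case
      using IH m'_dst m'_frame same_val i
      by (auto simp: batch_prog_def m'_def[symmetric])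
  qed
  then show "i \<in> set is \<Longrightarrow> run_prog (batch_prog \<rho> t u dst ts is) m (\<rho> (dst i)) = sumprod \<rho> m (ts i)"
    and "r \<in> R \<Longrightarrow> r \<notin> dst ` set is \<union> {t, u} \<Longrightarrow> run_prog (batch_prog \<rho> t u dst ts is) m (\<rho> r) = m (\<rho> r)"
    by auto
qed

lemma length_batch_prog:
  assumes "\<And>i. i \<in> set is \<Longrightarrow> length (ts i) = k"
  shows "length (batch_prog \<rho> t u dst ts is) = length is * (1 + 4 * k)"
proof -
  have "length (sumprod_prog \<rho> t u d ts') = 1 + 4 * length ts'" for d ts'
    by (induction ts') (auto simp: sumprod_prog_def accumulate_prog_def)
  then show ?thesis
    using assms by (induction "is") (auto simp: batch_prog_def)
qed

lemma batch_prog_regs: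
  assumes "ins \<in> set (batch_prog \<rho> t u dst ts is)" "t \<in> R" "u \<in> R" "dst ` set is \<subseteq> R"
    and "\<And>i c x y. i \<in> set is \<Longrightarrow> (c, x, y) \<in> set (ts i) \<Longrightarrow> x \<in> R \<and> y \<in> R"
  shows "instr_regs ins \<subseteq> \<rho> ` R"
  using assms unfolding batch_prog_def sumprod_prog_def accumulate_prog_def by fastforce

definition modprop_trace ::
  "nat \<Rightarrow> nat \<Rightarrow> (nat \<Rightarrow> nat) \<Rightarrow> (nat \<Rightarrow> nat \<Rightarrow> real) \<Rightarrow> real \<Rightarrow>
   (nat \<Rightarrow> nat \<Rightarrow> nat \<Rightarrow> real) \<Rightarrow> nat \<Rightarrow> nat \<Rightarrow> nat \<Rightarrow> nat \<Rightarrow> real" where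
  "modprop_trace N C ct W \<mu> e t \<alpha> p q =
     (\<Sum>s\<in>{1..t}. tpow N C ct W s \<alpha> (ct p) * \<mu> ^ (s - 1) * e p q (t - s))"

lemma modprop_update_eq_trace:
  "modprop_update N C ct W \<mu> e L h p q t =
     L p t * e p q t +
     (\<Sum>\<alpha><C. (\<Sum>j\<in>{j. j < N \<and> ct j = \<alpha>}. L j t * h j t) * modprop_trace N C ct W \<mu> e t \<alpha> p q)"
  by (simp add: modprop_update_def modprop_trace_def)

lemma modprop_trace_0 [simp]: "modprop_trace N C ct W \<mu> e 0 \<alpha> p q = 0"
  by (simp add: modprop_trace_def)

lemma modprop_trace_Suc:
  "modprop_trace N C ct W \<mu> e (Suc t) \<alpha> p q =
     Wavg N ct W \<alpha> (ct p) * e p q t +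
     (\<Sum>\<gamma><C. real (ncount N ct \<gamma>) * Wavg N ct W \<alpha> \<gamma> * \<mu> * modprop_trace N C ct W \<mu> e t \<gamma> p q)"
proof -
  let ?T = "tpow N C ct W" and ?K = "\<lambda>\<gamma>. real (ncount N ct \<gamma>) * Wavg N ct W \<alpha> \<gamma> * \<mu>"
  have "modprop_trace N C ct W \<mu> e (Suc t) \<alpha> p q = (\<Sum>s\<in>{0..t}. ?T (Suc s) \<alpha> (ct p) * \<mu> ^ s * e p q (t - s))"
    unfolding modprop_trace_def One_nat_def sum.shift_bounds_cl_Suc_ivl by (simp del: tpow.simps)
  also have "\<dots> = Wavg N ct W \<alpha> (ct p) * e p q t + (\<Sum>s\<in>{1..t}. ?T (Suc s) \<alpha> (ct p) * \<mu> ^ s * e p q (t - s))"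
    by (simp add: sum.atLeast_Suc_atMost)
  also have "(\<Sum>s\<in>{1..t}. ?T (Suc s) \<alpha> (ct p) * \<mu> ^ s * e p q (t - s)) =
      (\<Sum>s\<in>{1..t}. \<Sum>\<gamma><C. ?K \<gamma> * (?T s \<gamma> (ct p) * \<mu> ^ (s - 1) * e p q (t - s)))"
  proof (rule sum.cong [OF refl])
    fix s assume "s \<in> {1..t}"
    then have "\<mu> ^ s = \<mu> * \<mu> ^ (s - 1)" and "s \<noteq> 0"
      by (auto simp: power_eq_if)
    then show "?T (Suc s) \<alpha> (ct p) * \<mu> ^ s * e p q (t - s) =
        (\<Sum>\<gamma><C. ?K \<gamma> * (?T s \<gamma> (ct p) * \<mu> ^ (s - 1) * e p q (t - s)))"
      by (simp add: sum_distrib_left sum_distrib_right mult_ac)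
  qed
  also have "\<dots> = (\<Sum>\<gamma><C. ?K \<gamma> * modprop_trace N C ct W \<mu> e t \<gamma> p q)"
    by (subst sum.swap) (simp add: modprop_trace_def sum_distrib_left)
  finally show ?thesis .
qed

lemma sum_type_eq_masked_sum:
  "(\<Sum>j\<in>{j. j < N \<and> ct j = \<alpha>}. f j) = (\<Sum>j<(N :: nat). if ct j = \<alpha> then f j else 0)"
  by (simp add: sum.If_cases lessThan_def Collect_conj_eq Int_commute)

lemma Wavg_eq_masked_sum:
  "Wavg N ct W \<alpha> \<beta> =
     (\<Sum>j<N. \<Sum>p<N. (if ct j = \<alpha> \<and> ct p = \<beta> then 1 / (real (ncount N ct \<alpha>) * real (ncount N ct \<beta>)) else 0) * W j p)"
  unfolding Wavg_def sum_type_eq_masked_sum by (auto simp: sum_divide_distrib intro!: sum.cong)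

text \<open>\<open>Trace \<alpha> p q\<close> carries \<open>modprop_trace\<close> from one time step to the next; all other registers
  are recomputed in every step, \<open>Tmp1\<close> and \<open>Tmp2\<close> being scratch space.\<close>

datatype reg =
    Input nat | One | Tmp1 | Tmp2
  | TypeSignal nat | TypeWeight nat nat | Coupling nat nat
  | Out nat nat | Trace nat nat nat | NextTrace nat nat nat

locale register_layout =
  fixes N C :: nat
begin

fun reg_ok :: "reg \<Rightarrow> bool" where
  "reg_ok (Input i) = (i < n_inputs N)"
| "reg_ok (TypeSignal \<alpha>) = (\<alpha> < C)"
| "reg_ok (TypeWeight \<alpha> \<beta>) = (\<alpha> < C \<and> \<beta> < C)"
| "reg_ok (Coupling \<alpha> \<beta>) = (\<alpha> < C \<and> \<beta> < C)"
| "reg_ok (Out p q) = (p < N \<and> q < N)"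
| "reg_ok (Trace \<alpha> p q) = (\<alpha> < C \<and> p < N \<and> q < N)"
| "reg_ok (NextTrace \<alpha> p q) = (\<alpha> < C \<and> p < N \<and> q < N)"
| "reg_ok _ = True"

fun reg_kind :: "reg \<Rightarrow> nat" where
  "reg_kind (Input _) = 0"
| "reg_kind One = 1"
| "reg_kind Tmp1 = 2"
| "reg_kind Tmp2 = 3"
| "reg_kind (TypeSignal _) = 4"
| "reg_kind (TypeWeight _ _) = 5"
| "reg_kind (Coupling _ _) = 6"
| "reg_kind (Out _ _) = 7"
| "reg_kind (Trace _ _ _) = 8"
| "reg_kind (NextTrace _ _ _) = 9"

fun reg_index :: "reg \<Rightarrow> nat" where
  "reg_index (Input i) = i"
| "reg_index (TypeSignal \<alpha>) = \<alpha>"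
| "reg_index (TypeWeight \<alpha> \<beta>) = \<alpha> * C + \<beta>"
| "reg_index (Coupling \<alpha> \<beta>) = \<alpha> * C + \<beta>"
| "reg_index (Out p q) = p * N + q"
| "reg_index (Trace \<alpha> p q) = (\<alpha> * N + p) * N + q"
| "reg_index (NextTrace \<alpha> p q) = (\<alpha> * N + p) * N + q"
| "reg_index _ = 0"

text \<open>The ten kinds of registers are interleaved: the kind of a register is its address modulo 10, and
  within a kind the arguments are encoded in mixed radix, so that all registers fit below \<open>n_regs\<close>.\<close>

definition addr :: "reg \<Rightarrow> nat" where
  "addr r = reg_index r * 10 + reg_kind r"

definition n_regs :: nat where
  "n_regs = 10 * (n_inputs N + C * C + C * N * N)"

lemma reg_kind_less: "reg_kind r < 10"
  by (cases r) simp_all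

lemma inj_on_addr: "inj_on addr {r. reg_ok r}"
proof (rule inj_onI)
  fix r r' assume ok: "r \<in> {r. reg_ok r}" "r' \<in> {r. reg_ok r}" and "addr r = addr r'"
  then have "reg_index r = reg_index r'" "reg_kind r = reg_kind r'"
    unfolding addr_def using mixed_radix_eq_iff reg_kind_less by blast+
  with ok show "r = r'"
    by (cases r; cases r') (auto simp: mixed_radix_eq_iff)
qed

lemma addr_eq_iff: "reg_ok r \<Longrightarrow> reg_ok r' \<Longrightarrow> addr r = addr r' \<longleftrightarrow> r = r'"
  using inj_on_addr by (auto dest: inj_onD)

lemma reg_index_less:
  assumes "reg_ok r"
  shows "reg_index r < n_inputs N + C * C + C * N * N"
proof (cases r)
  case (TypeSignal \<alpha>)
  with assms have "\<alpha> < C * C" by (simp add: less_le_trans[OF _ le_square])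
  then show ?thesis using TypeSignal by simp
next
  case (TypeWeight \<alpha> \<beta>)
  with assms have "\<alpha> * C + \<beta> < C * C" by (simp add: mixed_radix_less)
  then show ?thesis using TypeWeight by simp
next
  case (Coupling \<alpha> \<beta>)
  with assms have "\<alpha> * C + \<beta> < C * C" by (simp add: mixed_radix_less)
  then show ?thesis using Coupling by simp
next
  case (Out p q)
  with assms have "p * N + q < N * N" by (simp add: mixed_radix_less)
  then show ?thesis using Out by (simp add: n_inputs_def power2_eq_square)
next
  case (Trace \<alpha> p q)
  with assms have "(\<alpha> * N + p) * N + q < C * N * N" by (simp add: mixed_radix_less)
  then show ?thesis using Trace by simp
next
  case (NextTrace \<alpha> p q)
  with assms have "(\<alpha> * N + p) * N + q < C * N * N" by (simp add: mixed_radix_less)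
  then show ?thesis using NextTrace by simp
qed (use assms in \<open>auto simp: n_inputs_def\<close>)

lemma addr_less: "reg_ok r \<Longrightarrow> addr r < n_regs"
  using reg_index_less[of r] reg_kind_less[of r] by (simp add: addr_def n_regs_def)

lemma n_regs_le:
  assumes "1 \<le> C" "C \<le> N"
  shows "n_regs \<le> 70 * (C * N * N)"
proof -
  obtain c d where "C = Suc c" "N = Suc (c + d)"
    using assms by (cases C) (auto dest: le_Suc_ex)
  then show ?thesis
    unfolding n_regs_def n_inputs_def by (simp add: algebra_simps power2_eq_square)
qed

end

locale modprop_machine = register_layout +
  fixes ct :: "nat \<Rightarrow> nat"
  assumes type_less: "j < N \<Longrightarrow> ct j < C"
begin

abbreviation "W_in p q \<equiv> Input (p * N + q)"
abbreviation "e_in p q \<equiv> Input (N\<^sup>2 + (p * N + q))"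
abbreviation "L_in j \<equiv> Input (2 * N\<^sup>2 + j)"
abbreviation "h_in j \<equiv> Input (2 * N\<^sup>2 + N + j)"
abbreviation "\<mu>_in \<equiv> Input (2 * N\<^sup>2 + 2 * N)"

abbreviation phase :: "('i \<Rightarrow> reg) \<Rightarrow> ('i \<Rightarrow> (real \<times> reg \<times> reg) list) \<Rightarrow> 'i list \<Rightarrow> instr list" where
  "phase \<equiv> batch_prog addr Tmp1 Tmp2"

definition type_pairs :: "(nat \<times> nat) list" where
  "type_pairs = List.product [0..<C] [0..<C]"

definition unit_pairs :: "(nat \<times> nat) list" where
  "unit_pairs = List.product [0..<N] [0..<N]"

definition trace_indices :: "(nat \<times> nat \<times> nat) list" where
  "trace_indices = List.product [0..<C] unit_pairs"

definition type_signal_terms :: "nat \<Rightarrow> (real \<times> reg \<times> reg) list" where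
  "type_signal_terms \<alpha> = map (\<lambda>j. (if ct j = \<alpha> then 1 else 0, L_in j, h_in j)) [0..<N]"

definition type_weight_terms :: "nat \<times> nat \<Rightarrow> (real \<times> reg \<times> reg) list" where
  "type_weight_terms = (\<lambda>(\<alpha>, \<beta>). concat (map (\<lambda>j. map (\<lambda>p.
     (if ct j = \<alpha> \<and> ct p = \<beta> then 1 / (real (ncount N ct \<alpha>) * real (ncount N ct \<beta>)) else 0,
      W_in j p, One)) [0..<N]) [0..<N]))"

definition coupling_terms :: "nat \<times> nat \<Rightarrow> (real \<times> reg \<times> reg) list" where
  "coupling_terms = (\<lambda>(\<alpha>, \<gamma>). [(real (ncount N ct \<gamma>), TypeWeight \<alpha> \<gamma>, \<mu>_in)])"

definition output_terms :: "nat \<times> nat \<Rightarrow> (real \<times> reg \<times> reg) list" where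
  "output_terms = (\<lambda>(p, q). (1, L_in p, e_in p q) # map (\<lambda>\<alpha>. (1, TypeSignal \<alpha>, Trace \<alpha> p q)) [0..<C])"

definition next_trace_terms :: "nat \<times> nat \<times> nat \<Rightarrow> (real \<times> reg \<times> reg) list" where
  "next_trace_terms = (\<lambda>(\<alpha>, p, q).
     (1, TypeWeight \<alpha> (ct p), e_in p q) # map (\<lambda>\<gamma>. (1, Coupling \<alpha> \<gamma>, Trace \<gamma> p q)) [0..<C])"

definition commit_terms :: "nat \<times> nat \<times> nat \<Rightarrow> (real \<times> reg \<times> reg) list" where
  "commit_terms = (\<lambda>(\<alpha>, p, q). [(1, NextTrace \<alpha> p q, One)])"

definition type_signal_phase :: "instr list" where
  "type_signal_phase = phase TypeSignal type_signal_terms [0..<C]"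

definition type_weight_phase :: "instr list" where
  "type_weight_phase = phase (\<lambda>(\<alpha>, \<beta>). TypeWeight \<alpha> \<beta>) type_weight_terms type_pairs"

definition coupling_phase :: "instr list" where
  "coupling_phase = phase (\<lambda>(\<alpha>, \<gamma>). Coupling \<alpha> \<gamma>) coupling_terms type_pairs"

definition output_phase :: "instr list" where
  "output_phase = phase (\<lambda>(p, q). Out p q) output_terms unit_pairs"

definition next_trace_phase :: "instr list" where
  "next_trace_phase = phase (\<lambda>(\<alpha>, p, q). NextTrace \<alpha> p q) next_trace_terms trace_indices"

definition commit_phase :: "instr list" where
  "commit_phase = phase (\<lambda>(\<alpha>, p, q). Trace \<alpha> p q) commit_terms trace_indices"

definition aggregate_prog :: "instr list" where
  "aggregate_prog = Const (addr One) 1 # type_signal_phase @ type_weight_phase @ coupling_phase"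

definition step_prog :: "instr list" where
  "step_prog = aggregate_prog @ output_phase @ next_trace_phase @ commit_phase"

definition phase_ok :: "('i \<Rightarrow> reg) \<Rightarrow> ('i \<Rightarrow> (real \<times> reg \<times> reg) list) \<Rightarrow> 'i list \<Rightarrow> bool" where
  "phase_ok dst ts is \<longleftrightarrow> inj dst \<and> Tmp1 \<notin> range dst \<and> Tmp2 \<notin> range dst \<and>
     (\<forall>i\<in>set is. reg_ok (dst i) \<and> (\<forall>(c, x, y)\<in>set (ts i).
        reg_ok x \<and> reg_ok y \<and> x \<notin> range dst \<union> {Tmp1, Tmp2} \<and> y \<notin> range dst \<union> {Tmp1, Tmp2}))"

lemma run_phase:
  assumes "phase_ok dst ts is"
  shows "i \<in> set is \<Longrightarrow> run_prog (phase dst ts is) m (addr (dst i)) = sumprod addr m (ts i)"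
    and "reg_ok r \<Longrightarrow> r \<notin> range dst \<union> {Tmp1, Tmp2} \<Longrightarrow> run_prog (phase dst ts is) m (addr r) = m (addr r)"
proof -
  have ok: "inj dst" "Tmp1 \<notin> range dst" "Tmp2 \<notin> range dst" "\<And>i. i \<in> set is \<Longrightarrow> reg_ok (dst i)"
    "\<And>i c x y. i \<in> set is \<Longrightarrow> (c, x, y) \<in> set (ts i) \<Longrightarrow>
       reg_ok x \<and> reg_ok y \<and> x \<notin> range dst \<union> {Tmp1, Tmp2} \<and> y \<notin> range dst \<union> {Tmp1, Tmp2}"
    using assms unfolding phase_ok_def by fast+
  have "inj_on addr {r. reg_ok r}" "Tmp1 \<in> {r. reg_ok r}" "Tmp2 \<in> {r. reg_ok r}" "Tmp1 \<noteq> Tmp2"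
    "Tmp1 \<notin> dst ` set is" "Tmp2 \<notin> dst ` set is" "inj_on dst (set is)" "dst ` set is \<subseteq> {r. reg_ok r}"
    using inj_on_addr ok(1-4) by (auto simp: inj_on_def)
  note batch = run_batch_prog[OF this]
  show "i \<in> set is \<Longrightarrow> run_prog (phase dst ts is) m (addr (dst i)) = sumprod addr m (ts i)"
    by (rule batch(1)) (use ok(5) in blast)+
  show "reg_ok r \<Longrightarrow> r \<notin> range dst \<union> {Tmp1, Tmp2} \<Longrightarrow> run_prog (phase dst ts is) m (addr r) = m (addr r)"
    by (rule batch(2)) (use ok(5) in blast)+
qed

lemma phase_regs:
  assumes "phase_ok dst ts is" "ins \<in> set (phase dst ts is)"
  shows "instr_regs ins \<subseteq> addr ` {r. reg_ok r}"
proof (rule batch_prog_regs[OF assms(2)])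
  show "\<And>i c x y. i \<in> set is \<Longrightarrow> (c, x, y) \<in> set (ts i) \<Longrightarrow> x \<in> {r. reg_ok r} \<and> y \<in> {r. reg_ok r}"
    and "dst ` set is \<subseteq> {r. reg_ok r}"
    using assms(1) unfolding phase_ok_def by fast+
qed simp_all

lemma type_signal_phase_ok: "phase_ok TypeSignal type_signal_terms [0..<C]"
  by (auto simp: phase_ok_def inj_def image_iff type_signal_terms_def)

lemma type_weight_phase_ok: "phase_ok (\<lambda>(\<alpha>, \<beta>). TypeWeight \<alpha> \<beta>) type_weight_terms type_pairs"
  by (auto simp: phase_ok_def inj_def image_iff type_pairs_def type_weight_terms_def)

lemma coupling_phase_ok: "phase_ok (\<lambda>(\<alpha>, \<gamma>). Coupling \<alpha> \<gamma>) coupling_terms type_pairs"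
  by (auto simp: phase_ok_def inj_def image_iff type_pairs_def coupling_terms_def)

lemma output_phase_ok: "phase_ok (\<lambda>(p, q). Out p q) output_terms unit_pairs"
  by (auto simp: phase_ok_def inj_def image_iff unit_pairs_def output_terms_def)

lemma next_trace_phase_ok: "phase_ok (\<lambda>(\<alpha>, p, q). NextTrace \<alpha> p q) next_trace_terms trace_indices"
  by (auto simp: phase_ok_def inj_def image_iff trace_indices_def unit_pairs_def next_trace_terms_def type_less)

lemma commit_phase_ok: "phase_ok (\<lambda>(\<alpha>, p, q). Trace \<alpha> p q) commit_terms trace_indices"
  by (auto simp: phase_ok_def inj_def image_iff trace_indices_def unit_pairs_def commit_terms_def)

lemma run_type_signal_phase:
  shows "\<alpha> < C \<Longrightarrow> run_prog type_signal_phase m (addr (TypeSignal \<alpha>)) =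
      (\<Sum>j\<in>{j. j < N \<and> ct j = \<alpha>}. m (addr (L_in j)) * m (addr (h_in j)))"
    and "reg_ok r \<Longrightarrow> r \<notin> range TypeSignal \<union> {Tmp1, Tmp2} \<Longrightarrow>
      run_prog type_signal_phase m (addr r) = m (addr r)"
  using run_phase[OF type_signal_phase_ok, folded type_signal_phase_def]
  by (auto simp: type_signal_terms_def sum_list_map_upt sum_type_eq_masked_sum intro!: sum.cong)

lemma run_type_weight_phase:
  shows "\<alpha> < C \<Longrightarrow> \<beta> < C \<Longrightarrow> run_prog type_weight_phase m (addr (TypeWeight \<alpha> \<beta>)) =
      (\<Sum>j<N. \<Sum>p<N. (if ct j = \<alpha> \<and> ct p = \<beta> then 1 / (real (ncount N ct \<alpha>) * real (ncount N ct \<beta>)) else 0)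
         * m (addr (W_in j p))) * m (addr One)"
    and "reg_ok r \<Longrightarrow> r \<notin> range (\<lambda>(\<alpha>, \<beta>). TypeWeight \<alpha> \<beta>) \<union> {Tmp1, Tmp2} \<Longrightarrow>
      run_prog type_weight_phase m (addr r) = m (addr r)"
  using run_phase(1)[OF type_weight_phase_ok, folded type_weight_phase_def, where i = "(\<alpha>, \<beta>)"]
    run_phase(2)[OF type_weight_phase_ok, folded type_weight_phase_def]
  by (auto simp: type_weight_terms_def type_pairs_def sum_list_map_upt sum_distrib_right)

lemma run_coupling_phase:
  shows "\<alpha> < C \<Longrightarrow> \<gamma> < C \<Longrightarrow> run_prog coupling_phase m (addr (Coupling \<alpha> \<gamma>)) =
      real (ncount N ct \<gamma>) * m (addr (TypeWeight \<alpha> \<gamma>)) * m (addr \<mu>_in)"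
    and "reg_ok r \<Longrightarrow> r \<notin> range (\<lambda>(\<alpha>, \<gamma>). Coupling \<alpha> \<gamma>) \<union> {Tmp1, Tmp2} \<Longrightarrow>
      run_prog coupling_phase m (addr r) = m (addr r)"
  using run_phase(1)[OF coupling_phase_ok, folded coupling_phase_def, where i = "(\<alpha>, \<gamma>)"]
    run_phase(2)[OF coupling_phase_ok, folded coupling_phase_def]
  by (auto simp: coupling_terms_def type_pairs_def)

lemma run_output_phase:
  shows "p < N \<Longrightarrow> q < N \<Longrightarrow> run_prog output_phase m (addr (Out p q)) =
      m (addr (L_in p)) * m (addr (e_in p q)) + (\<Sum>\<alpha><C. m (addr (TypeSignal \<alpha>)) * m (addr (Trace \<alpha> p q)))"
    and "reg_ok r \<Longrightarrow> r \<notin> range (\<lambda>(p, q). Out p q) \<union> {Tmp1, Tmp2} \<Longrightarrow>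
      run_prog output_phase m (addr r) = m (addr r)"
  using run_phase(1)[OF output_phase_ok, folded output_phase_def, where i = "(p, q)"]
    run_phase(2)[OF output_phase_ok, folded output_phase_def]
  by (auto simp: output_terms_def unit_pairs_def sum_list_map_upt)

lemma run_next_trace_phase:
  shows "\<alpha> < C \<Longrightarrow> p < N \<Longrightarrow> q < N \<Longrightarrow> run_prog next_trace_phase m (addr (NextTrace \<alpha> p q)) =
      m (addr (TypeWeight \<alpha> (ct p))) * m (addr (e_in p q)) +
      (\<Sum>\<gamma><C. m (addr (Coupling \<alpha> \<gamma>)) * m (addr (Trace \<gamma> p q)))"
    and "reg_ok r \<Longrightarrow> r \<notin> range (\<lambda>(\<alpha>, p, q). NextTrace \<alpha> p q) \<union> {Tmp1, Tmp2} \<Longrightarrow>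
      run_prog next_trace_phase m (addr r) = m (addr r)"
  using run_phase(1)[OF next_trace_phase_ok, folded next_trace_phase_def, where i = "(\<alpha>, p, q)"]
    run_phase(2)[OF next_trace_phase_ok, folded next_trace_phase_def]
  by (auto simp: next_trace_terms_def trace_indices_def unit_pairs_def sum_list_map_upt)

lemma run_commit_phase:
  shows "\<alpha> < C \<Longrightarrow> p < N \<Longrightarrow> q < N \<Longrightarrow> run_prog commit_phase m (addr (Trace \<alpha> p q)) =
      m (addr (NextTrace \<alpha> p q)) * m (addr One)"
    and "reg_ok r \<Longrightarrow> r \<notin> range (\<lambda>(\<alpha>, p, q). Trace \<alpha> p q) \<union> {Tmp1, Tmp2} \<Longrightarrow>
      run_prog commit_phase m (addr r) = m (addr r)"
  using run_phase(1)[OF commit_phase_ok, folded commit_phase_def, where i = "(\<alpha>, p, q)"]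
    run_phase(2)[OF commit_phase_ok, folded commit_phase_def]
  by (auto simp: commit_terms_def trace_indices_def unit_pairs_def)

lemma run_aggregate_prog:
  assumes inputs: "\<And>i. i < n_inputs N \<Longrightarrow> m (addr (Input i)) = mp_input N W \<mu> e L h t i"
  defines "m' \<equiv> run_prog aggregate_prog m"
  shows "\<alpha> < C \<Longrightarrow> m' (addr (TypeSignal \<alpha>)) = (\<Sum>j\<in>{j. j < N \<and> ct j = \<alpha>}. L j t * h j t)"
    and "\<alpha> < C \<Longrightarrow> \<beta> < C \<Longrightarrow> m' (addr (TypeWeight \<alpha> \<beta>)) = Wavg N ct W \<alpha> \<beta>"
    and "\<alpha> < C \<Longrightarrow> \<gamma> < C \<Longrightarrow> m' (addr (Coupling \<alpha> \<gamma>)) = real (ncount N ct \<gamma>) * Wavg N ct W \<alpha> \<gamma> * \<mu>"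
    and "m' (addr One) = 1"
    and "reg_ok r \<Longrightarrow> r \<notin> {One, Tmp1, Tmp2} \<union> range TypeSignal \<union> range (\<lambda>(\<alpha>, \<beta>). TypeWeight \<alpha> \<beta>) \<union>
      range (\<lambda>(\<alpha>, \<gamma>). Coupling \<alpha> \<gamma>) \<Longrightarrow> m' (addr r) = m (addr r)"
proof -
  define m1 where "m1 = m(addr One := 1)"
  define m2 where "m2 = run_prog type_signal_phase m1"
  define m3 where "m3 = run_prog type_weight_phase m2"
  have m': "m' = run_prog coupling_phase m3"
    by (simp add: m'_def aggregate_prog_def m1_def m2_def m3_def)
  have m1: "m1 (addr One) = 1" "\<And>r. reg_ok r \<Longrightarrow> r \<noteq> One \<Longrightarrow> m1 (addr r) = m (addr r)"
    by (auto simp: m1_def addr_eq_iff)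
  have m2_frame: "m2 (addr r) = m1 (addr r)" if "reg_ok r" "r \<notin> range TypeSignal \<union> {Tmp1, Tmp2}" for r
    unfolding m2_def using that by (rule run_type_signal_phase(2))
  have m3_frame: "m3 (addr r) = m2 (addr r)"
    if "reg_ok r" "r \<notin> range (\<lambda>(\<alpha>, \<beta>). TypeWeight \<alpha> \<beta>) \<union> {Tmp1, Tmp2}" for r
    unfolding m3_def using that by (rule run_type_weight_phase(2))
  have m'_frame: "m' (addr r) = m3 (addr r)"
    if "reg_ok r" "r \<notin> range (\<lambda>(\<alpha>, \<gamma>). Coupling \<alpha> \<gamma>) \<union> {Tmp1, Tmp2}" for r
    unfolding m' using that by (rule run_coupling_phase(2))
  note frames = m'_frame m3_frame m2_frame m1 image_iff
  have type_signal: "m2 (addr (TypeSignal \<alpha>)) = (\<Sum>j\<in>{j. j < N \<and> ct j = \<alpha>}. L j t * h j t)" if "\<alpha> < C" for \<alpha>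
    using that by (simp add: m2_def run_type_signal_phase(1) m1 inputs)
  have type_weight: "m3 (addr (TypeWeight \<alpha> \<beta>)) = Wavg N ct W \<alpha> \<beta>" if "\<alpha> < C" "\<beta> < C" for \<alpha> \<beta>
    using that by (simp add: m3_def run_type_weight_phase(1) frames inputs Wavg_eq_masked_sum)
  show "\<alpha> < C \<Longrightarrow> m' (addr (TypeSignal \<alpha>)) = (\<Sum>j\<in>{j. j < N \<and> ct j = \<alpha>}. L j t * h j t)"
    by (simp add: frames type_signal)
  show "\<alpha> < C \<Longrightarrow> \<beta> < C \<Longrightarrow> m' (addr (TypeWeight \<alpha> \<beta>)) = Wavg N ct W \<alpha> \<beta>"
    by (simp add: frames type_weight)
  show "\<alpha> < C \<Longrightarrow> \<gamma> < C \<Longrightarrow> m' (addr (Coupling \<alpha> \<gamma>)) = real (ncount N ct \<gamma>) * Wavg N ct W \<alpha> \<gamma> * \<mu>"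
    by (simp add: m' run_coupling_phase(1) type_weight frames inputs)
  show "m' (addr One) = 1"
    by (simp add: frames)
  show "reg_ok r \<Longrightarrow> r \<notin> {One, Tmp1, Tmp2} \<union> range TypeSignal \<union> range (\<lambda>(\<alpha>, \<beta>). TypeWeight \<alpha> \<beta>) \<union>
      range (\<lambda>(\<alpha>, \<gamma>). Coupling \<alpha> \<gamma>) \<Longrightarrow> m' (addr r) = m (addr r)"
    by (simp add: frames)
qed

lemma run_step:
  assumes inputs: "\<And>i. i < n_inputs N \<Longrightarrow> m (addr (Input i)) = mp_input N W \<mu> e L h t i"
    and traces: "\<And>\<alpha> p q. \<alpha> < C \<Longrightarrow> p < N \<Longrightarrow> q < N \<Longrightarrow>
      m (addr (Trace \<alpha> p q)) = modprop_trace N C ct W \<mu> e t \<alpha> p q"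
  shows "p < N \<Longrightarrow> q < N \<Longrightarrow> run_prog step_prog m (addr (Out p q)) = modprop_update N C ct W \<mu> e L h p q t"
    and "\<alpha> < C \<Longrightarrow> p < N \<Longrightarrow> q < N \<Longrightarrow>
      run_prog step_prog m (addr (Trace \<alpha> p q)) = modprop_trace N C ct W \<mu> e (Suc t) \<alpha> p q"
proof -
  define m4 where "m4 = run_prog aggregate_prog m"
  define m5 where "m5 = run_prog output_phase m4"
  define m6 where "m6 = run_prog next_trace_phase m5"
  have step: "run_prog step_prog m = run_prog commit_phase m6"
    by (simp add: step_prog_def m4_def m5_def m6_def)
  note m4 = run_aggregate_prog[OF inputs, folded m4_def]
  have m5_frame: "m5 (addr r) = m4 (addr r)" if "reg_ok r" "r \<notin> range (\<lambda>(p, q). Out p q) \<union> {Tmp1, Tmp2}" for r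
    unfolding m5_def using that by (rule run_output_phase(2))
  have m6_frame: "m6 (addr r) = m5 (addr r)"
    if "reg_ok r" "r \<notin> range (\<lambda>(\<alpha>, p, q). NextTrace \<alpha> p q) \<union> {Tmp1, Tmp2}" for r
    unfolding m6_def using that by (rule run_next_trace_phase(2))
  note frames = m6_frame m5_frame m4 image_iff
  have out: "m5 (addr (Out p q)) = modprop_update N C ct W \<mu> e L h p q t" if "p < N" "q < N" for p q
    using that by (simp add: m5_def run_output_phase(1) frames inputs traces modprop_update_eq_trace)
  have next_trace: "m6 (addr (NextTrace \<alpha> p q)) = modprop_trace N C ct W \<mu> e (Suc t) \<alpha> p q"
    if "\<alpha> < C" "p < N" "q < N" for \<alpha> p q
    using that by (simp add: m6_def run_next_trace_phase(1) frames inputs traces modprop_trace_Suc type_less)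
  show "p < N \<Longrightarrow> q < N \<Longrightarrow> run_prog step_prog m (addr (Out p q)) = modprop_update N C ct W \<mu> e L h p q t"
    by (simp add: step run_commit_phase(2) image_iff out m6_frame)
  show "\<alpha> < C \<Longrightarrow> p < N \<Longrightarrow> q < N \<Longrightarrow>
      run_prog step_prog m (addr (Trace \<alpha> p q)) = modprop_trace N C ct W \<mu> e (Suc t) \<alpha> p q"
    by (simp add: step run_commit_phase(1) next_trace frames)
qed

lemma run_step_loaded:
  assumes traces: "\<And>\<alpha> p q. \<alpha> < C \<Longrightarrow> p < N \<Longrightarrow> q < N \<Longrightarrow>
      m (addr (Trace \<alpha> p q)) = modprop_trace N C ct W \<mu> e t \<alpha> p q"
  shows "p < N \<Longrightarrow> q < N \<Longrightarrow>
      run_prog step_prog (load_inputs (\<lambda>i. addr (Input i)) (n_inputs N) (mp_input N W \<mu> e L h t) m) (addr (Out p q))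
        = modprop_update N C ct W \<mu> e L h p q t"
    and "\<alpha> < C \<Longrightarrow> p < N \<Longrightarrow> q < N \<Longrightarrow>
      run_prog step_prog (load_inputs (\<lambda>i. addr (Input i)) (n_inputs N) (mp_input N W \<mu> e L h t) m) (addr (Trace \<alpha> p q))
        = modprop_trace N C ct W \<mu> e (Suc t) \<alpha> p q"
proof -
  define m' where "m' = load_inputs (\<lambda>i. addr (Input i)) (n_inputs N) (mp_input N W \<mu> e L h t) m"
  have inj: "inj_on (\<lambda>i. addr (Input i)) {..<n_inputs N}"
    by (auto simp: inj_on_def addr_eq_iff)
  have "m' (addr (Input i)) = mp_input N W \<mu> e L h t i" if "i < n_inputs N" for i
    unfolding m'_def using inj that by (rule load_inputs_at)
  moreover have "m' (addr (Trace \<alpha> p q)) = modprop_trace N C ct W \<mu> e t \<alpha> p q"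
    if "\<alpha> < C" "p < N" "q < N" for \<alpha> p q
  proof -
    have "addr (Trace \<alpha> p q) \<notin> (\<lambda>i. addr (Input i)) ` {..<n_inputs N}"
      using that by (auto simp: addr_eq_iff)
    then show ?thesis
      unfolding m'_def using that by (simp add: load_inputs_other traces)
  qed
  ultimately show "p < N \<Longrightarrow> q < N \<Longrightarrow> run_prog step_prog m' (addr (Out p q)) = modprop_update N C ct W \<mu> e L h p q t"
    and "\<alpha> < C \<Longrightarrow> p < N \<Longrightarrow> q < N \<Longrightarrow>
      run_prog step_prog m' (addr (Trace \<alpha> p q)) = modprop_trace N C ct W \<mu> e (Suc t) \<alpha> p q"
    by (simp_all add: run_step)
qed

lemma mem_seq_step_prog:
  shows mem_seq_Trace: "\<alpha> < C \<Longrightarrow> p < N \<Longrightarrow> q < N \<Longrightarrow>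
      mem_seq step_prog (\<lambda>i. addr (Input i)) (n_inputs N) (mp_input N W \<mu> e L h) t (addr (Trace \<alpha> p q))
        = modprop_trace N C ct W \<mu> e (Suc t) \<alpha> p q"
    and mem_seq_Out: "p < N \<Longrightarrow> q < N \<Longrightarrow>
      mem_seq step_prog (\<lambda>i. addr (Input i)) (n_inputs N) (mp_input N W \<mu> e L h) t (addr (Out p q))
        = modprop_update N C ct W \<mu> e L h p q t"
proof -
  show trace: "\<alpha> < C \<Longrightarrow> p < N \<Longrightarrow> q < N \<Longrightarrow>
      mem_seq step_prog (\<lambda>i. addr (Input i)) (n_inputs N) (mp_input N W \<mu> e L h) t (addr (Trace \<alpha> p q))
        = modprop_trace N C ct W \<mu> e (Suc t) \<alpha> p q" for t \<alpha> p q
    by (induction t arbitrary: \<alpha> p q) (simp_all add: run_step_loaded(2))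
  show "p < N \<Longrightarrow> q < N \<Longrightarrow>
      mem_seq step_prog (\<lambda>i. addr (Input i)) (n_inputs N) (mp_input N W \<mu> e L h) t (addr (Out p q))
        = modprop_update N C ct W \<mu> e L h p q t"
    using trace by (cases t) (simp_all add: run_step_loaded(1))
qed

lemma valid_step_machine: "valid_machine n_regs step_prog (\<lambda>i. addr (Input i)) (\<lambda>p q. addr (Out p q)) N"
proof -
  have "instr_regs ins \<subseteq> addr ` {r. reg_ok r}" if "ins \<in> set step_prog" for ins
    using that unfolding step_prog_def aggregate_prog_def
    by (auto dest!: phase_regs[OF type_signal_phase_ok, folded type_signal_phase_def]
        phase_regs[OF type_weight_phase_ok, folded type_weight_phase_def]
        phase_regs[OF coupling_phase_ok, folded coupling_phase_def]
        phase_regs[OF output_phase_ok, folded output_phase_def]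
        phase_regs[OF next_trace_phase_ok, folded next_trace_phase_def]
        phase_regs[OF commit_phase_ok, folded commit_phase_def])
  then show ?thesis
    using addr_less by (fastforce simp: valid_machine_def)
qed

lemma length_step_prog:
  "length step_prog = 1 + C * (1 + 4 * N) + C * C * (1 + 4 * (N * N)) + C * C * 5 +
     N * N * (1 + 4 * Suc C) + C * (N * N) * (1 + 4 * Suc C) + C * (N * N) * 5"
proof -
  have "length type_signal_phase = C * (1 + 4 * N)"
    unfolding type_signal_phase_def by (subst length_batch_prog[where k = N]) (auto simp: type_signal_terms_def)
  moreover have "length type_weight_phase = C * C * (1 + 4 * (N * N))"
    unfolding type_weight_phase_def
    by (subst length_batch_prog[where k = "N * N"]) (auto simp: type_weight_terms_def type_pairs_def length_concat o_def sum_list_triv)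
  moreover have "length coupling_phase = C * C * 5"
    unfolding coupling_phase_def by (subst length_batch_prog[where k = 1]) (auto simp: coupling_terms_def type_pairs_def)
  moreover have "length output_phase = N * N * (1 + 4 * Suc C)"
    unfolding output_phase_def by (subst length_batch_prog[where k = "Suc C"]) (auto simp: output_terms_def unit_pairs_def)
  moreover have "length next_trace_phase = C * (N * N) * (1 + 4 * Suc C)"
    unfolding next_trace_phase_def
    by (subst length_batch_prog[where k = "Suc C"]) (auto simp: next_trace_terms_def trace_indices_def unit_pairs_def)
  moreover have "length commit_phase = C * (N * N) * 5"
    unfolding commit_phase_def
    by (subst length_batch_prog[where k = 1]) (auto simp: commit_terms_def trace_indices_def unit_pairs_def)
  ultimately show ?thesis
    by (simp add: step_prog_def aggregate_prog_def)
qed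

lemma length_step_prog_le:
  assumes "1 \<le> C" "1 \<le> N"
  shows "length step_prog \<le> 40 * (C * C * (N * N))"
proof -
  \<comment> \<open>With \<open>C = c + 1\<close> and \<open>N = n + 1\<close> the inequality compares polynomials in \<open>c, n\<close>
    with nonnegative coefficients monomial by monomial.\<close>
  obtain c n where "C = Suc c" "N = Suc n"
    using assms by (cases C; cases N) auto
  then show ?thesis
    unfolding length_step_prog by (simp add: algebra_simps)
qed

end

theorem proposition1:
  shows "\<exists>c1 c2 :: real. c1 > 0 \<and> c2 > 0 \<and>
    (\<forall>(N::nat) (C::nat) (ct::nat \<Rightarrow> nat).
       N \<ge> 1 \<and> (\<forall>j<N. ct j < C) \<and> (\<forall>\<alpha><C. \<exists>j<N. ct j = \<alpha>) \<longrightarrow>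
       (\<exists>M prog posIn posOut.
          valid_machine M prog posIn posOut N \<and>
          real M \<le> c1 * real C * real N ^ 2 \<and>
          real (length prog) \<le> c2 * real C ^ 2 * real N ^ 2 \<and>
          (\<forall>W \<mu> e L h t p q. 1 \<le> t \<and> p < N \<and> q < N \<longrightarrow>
             mem_seq prog posIn (n_inputs N) (mp_input N W \<mu> e L h) t (posOut p q)
               = modprop_update N C ct W \<mu> e L h p q t)))"
proof (rule exI[where x = 70], rule exI[where x = 40], intro conjI allI impI)
  \<comment> \<open>The machine is correct from \<open>t = 0\<close> on.\<close>
  fix N C :: nat and ct :: "nat \<Rightarrow> nat"
  assume hyps: "N \<ge> 1 \<and> (\<forall>j<N. ct j < C) \<and> (\<forall>\<alpha><C. \<exists>j<N. ct j = \<alpha>)"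
  then interpret modprop_machine N C ct
    by unfold_locales auto
  have "1 \<le> C" "1 \<le> N"
    using hyps by auto
  moreover have "C \<le> N"
    using hyps by (intro le_if_lessThan_subset_image[where f = ct]) auto
  ultimately have "real n_regs \<le> real (70 * (C * N * N))"
    and "real (length step_prog) \<le> real (40 * (C * C * (N * N)))"
    using n_regs_le length_step_prog_le by (simp_all only: of_nat_le_iff)
  then have "real n_regs \<le> 70 * real C * real N ^ 2"
    and "real (length step_prog) \<le> 40 * real C ^ 2 * real N ^ 2"
    by (simp_all add: power2_eq_square mult_ac)
  then show "\<exists>M prog posIn posOut.
          valid_machine M prog posIn posOut N \<and>
          real M \<le> 70 * real C * real N ^ 2 \<and>
          real (length prog) \<le> 40 * real C ^ 2 * real N ^ 2 \<and>
          (\<forall>W \<mu> e L h t p q. 1 \<le> t \<and> p < N \<and> q < N \<longrightarrow>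
             mem_seq prog posIn (n_inputs N) (mp_input N W \<mu> e L h) t (posOut p q)
               = modprop_update N C ct W \<mu> e L h p q t)"
    using valid_step_machine mem_seq_Out by blast
qed simp_all

end
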